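(* For every $y\in\mathrm{Cay}$, $[y]=\mathcal{B}(\gamma(y))$. Moreover, for every permutation $\sigma$, $\mathcal{B}(\sigma)=[\sigma^{-1}]$.
   Context: $\mathrm{Cay}_n$ is the set of Cayley permutations of length $n$ (words of positive integers in which every integer from $1$ to the maximum occurs), $\mathrm{WI}_n$ its weakly increasing elements, $\mathrm{Cay}=\bigcup_n\mathrm{Cay}_n$. For $(u,v)\in\mathrm{WI}_n\times\mathrm{Cay}_n$, viewed as a biword with columns $\binom{u(i)}{v(i)}$, the Burge transpose $(u,v)^T$ turns every column $\binom{a}{b}$ into $\binom{b}{a}$ and sorts the columns increasingly by top entry, ties by decreasing bottom entry. For $x\in\mathrm{Cay}_n$, $\gamma(x)$ is the bottom row of $(1\,2\cdots n,\;x)^T$ (a permutation of $[n]$). $x\sim y$ iff $\gamma(x)=\gamma(y)$; $[y]$ is the class of $y$. For a permutation $\pi$ of $[n]$ with descent set $\mathrm{Des}(\pi)=\{i:\pi(i)>\pi(i+1)\}$, let $\mathrm{WI}(\pi)=\{u\in\mathrm{WI}_n:\mathrm{Des}(u)\subseteq\mathrm{Des}(\pi)\}$, where for weakly increasing $u$, $\mathrm{Des}(u)=\{i:u(i)=u(i+1)\}$. For $u\in\mathrm{WI}(\pi)$ the transpose $(u,\pi)^T$ has top row $1\,2\cdots n$; the Fishburn basis $\mathcal{B}(\pi)$ is the set of bottom rows of $(u,\pi)^T$ over all $u\in\mathrm{WI}(\pi)$. *)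

theory Defs
  imports Main "HOL-Library.Product_Lexorder"
begin

(* Words are lists of naturals; position i (1-based in the paper) is list index i-1. *)

definition is_cayley :: "nat list \<Rightarrow> bool" where
  "is_cayley x \<longleftrightarrow> set x = {1..Max (insert 0 (set x))}"

definition Cay_n :: "nat \<Rightarrow> nat list set" where
  "Cay_n n = {x. length x = n \<and> is_cayley x}"

definition Cay :: "nat list set" where
  "Cay = (\<Union>n. Cay_n n)"

definition WI_n :: "nat \<Rightarrow> nat list set" where
  "WI_n n = {u \<in> Cay_n n. sorted u}"

definition is_perm :: "nat list \<Rightarrow> bool" where
  "is_perm p \<longleftrightarrow> distinct p \<and> set p = {1..length p}"

definition perm_inv :: "nat list \<Rightarrow> nat list" where
  "perm_inv p = map (\<lambda>j. Suc (THE i. i < length p \<and> p ! i = j)) [1..<Suc (length p)]"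

(* Burge transpose of a biword (top row, bottom row): swap each column and sort
   columns increasingly by top entry, ties by decreasing bottom entry. *)
definition burge_T :: "nat list \<Rightarrow> nat list \<Rightarrow> nat list \<times> nat list" where
  "burge_T u v =
     (let cols = sort_key (\<lambda>(a, b). (a, - int b)) (zip v u)
      in (map fst cols, map snd cols))"

definition gamma :: "nat list \<Rightarrow> nat list" where
  "gamma x = snd (burge_T [1..<Suc (length x)] x)"

definition cay_class :: "nat list \<Rightarrow> nat list set" where
  "cay_class y = {x \<in> Cay. gamma x = gamma y}"

(* descent sets, 1-based positions *)
definition Des :: "nat list \<Rightarrow> nat set" where
  "Des p = {i. 1 \<le> i \<and> i < length p \<and> p ! (i - 1) > p ! i}"

definition Des_WI :: "nat list \<Rightarrow> nat set" where
  "Des_WI u = {i. 1 \<le> i \<and> i < length u \<and> u ! (i - 1) = u ! i}"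

definition WI_of :: "nat list \<Rightarrow> nat list set" where
  "WI_of p = {u \<in> WI_n (length p). Des_WI u \<subseteq> Des p}"

definition fishburn_basis :: "nat list \<Rightarrow> nat list set" where
  "fishburn_basis p = {snd (burge_T u p) | u. u \<in> WI_of p}"

end

theory Submission imports Defs "HOL-Library.Multiset" begin

(* Read words as functions on positions and write x o p for the word (x(p(1)), ..., x(p(n))).
   The columns of the biword (1 2 ... n, x) are the pairs (x(j), j), so gamma x = p exactly when
   these columns, listed along p, are in Burge order: u = x o p is weakly increasing and its
   plateaus lie in Des p. Dually, the Burge transpose of (u, p) is (1 2 ... n, u o p^-1).
   Hence x |-> x o p and u |-> u o p^-1 are inverse bijections between the gamma-fibre of p and
   WI(p); they keep the set of letters, hence the Cayley property. Both claims follow because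
   gamma y is always a permutation and gamma (p^-1) = p. *)

declare upt_Suc [simp del]

definition word_comp :: "nat list \<Rightarrow> nat list \<Rightarrow> nat list" where
  "word_comp x p = map (\<lambda>j. x ! (j - 1)) p"

lemma length_word_comp [simp]: "length (word_comp x p) = length p"
  by (simp add: word_comp_def)

lemma word_comp_assoc:
  assumes "set q \<subseteq> {1..length p}"
  shows "word_comp (word_comp x p) q = word_comp x (word_comp p q)"
proof -
  have "j - 1 < length p" if "j \<in> set q" for j
    using subsetD[OF assms that] by auto
  then show ?thesis
    unfolding word_comp_def by simp
qed

lemma word_comp_id: "word_comp x [1..<Suc (length x)] = x"
  unfolding word_comp_def by (rule nth_equalityI) auto

lemma set_word_comp:
  assumes "set p = {1..length x}"
  shows "set (word_comp x p) = set x"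
proof -
  have "set (word_comp x p) = (\<lambda>j. x ! (j - 1)) ` {1..length x}"
    unfolding word_comp_def using assms by simp
  also have "\<dots> = set x"
  proof (intro equalityI subsetI)
    fix a assume "a \<in> set x"
    then obtain i where "i < length x" "a = x ! i"
      by (auto simp: in_set_conv_nth)
    then show "a \<in> (\<lambda>j. x ! (j - 1)) ` {1..length x}"
      by (intro image_eqI[of _ _ "Suc i"]) auto
  qed auto
  finally show ?thesis .
qed

lemma is_cayley_word_comp:
  assumes "set p = {1..length x}"
  shows "is_cayley (word_comp x p) \<longleftrightarrow> is_cayley x"
  unfolding is_cayley_def set_word_comp[OF assms] ..

lemma length_perm_inv [simp]: "length (perm_inv p) = length p"
  by (simp add: perm_inv_def)

lemma nth_perm_inv:
  assumes "k < length p"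
  shows "perm_inv p ! k = Suc (THE i. i < length p \<and> p ! i = Suc k)"
  using assms by (simp add: perm_inv_def)

lemma perm_at_perm_inv:
  assumes "is_perm p" and "k < length p"
  shows "perm_inv p ! k - 1 < length p \<and> p ! (perm_inv p ! k - 1) = Suc k"
proof -
  have "Suc k \<in> set p"
    using assms unfolding is_perm_def by simp
  then obtain i where i: "i < length p" "p ! i = Suc k"
    by (auto simp: in_set_conv_nth)
  moreover have "(THE i. i < length p \<and> p ! i = Suc k) = i"
    using i assms(1) unfolding is_perm_def by (metis (mono_tags, lifting) nth_eq_iff_index_eq the_equality)
  ultimately show ?thesis
    unfolding nth_perm_inv[OF assms(2)] by simp
qed

lemma perm_inv_at_perm:
  assumes "is_perm p" and "i < length p"
  shows "perm_inv p ! (p ! i - 1) = Suc i"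
proof -
  have "p ! i \<in> {1..length p}"
    using assms nth_mem unfolding is_perm_def by blast
  then have "p ! i - 1 < length p" and "Suc (p ! i - 1) = p ! i"
    by auto
  moreover have "(THE i'. i' < length p \<and> p ! i' = p ! i) = i"
    using assms unfolding is_perm_def by (metis (mono_tags, lifting) nth_eq_iff_index_eq the_equality)
  ultimately show ?thesis
    using nth_perm_inv[of "p ! i - 1" p] by simp
qed

lemma word_comp_perm_perm_inv:
  assumes "is_perm p"
  shows "word_comp p (perm_inv p) = [1..<Suc (length p)]"
  unfolding word_comp_def
  by (rule nth_equalityI) (use assms perm_at_perm_inv in auto)

lemma word_comp_perm_inv_perm:
  assumes "is_perm p"
  shows "word_comp (perm_inv p) p = [1..<Suc (length p)]"
  unfolding word_comp_def
  by (rule nth_equalityI) (use assms perm_inv_at_perm in auto)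

lemma set_perm_inv:
  assumes "is_perm p"
  shows "set (perm_inv p) = {1..length p}"
proof -
  have "set (perm_inv p) = set (word_comp (perm_inv p) p)"
    using assms unfolding is_perm_def by (simp add: set_word_comp)
  also have "\<dots> = {1..length p}"
    using assms by (simp add: word_comp_perm_inv_perm atLeastLessThanSuc_atLeastAtMost)
  finally show ?thesis .
qed

lemma word_comp_perm_inv_cancel:
  assumes "is_perm p" and "length x = length p"
  shows "word_comp (word_comp x p) (perm_inv p) = x"
proof -
  have "word_comp (word_comp x p) (perm_inv p) = word_comp x (word_comp p (perm_inv p))"
    using set_perm_inv[OF assms(1)] by (simp add: word_comp_assoc)
  also have "\<dots> = x"
    using assms word_comp_id[of x] by (simp add: word_comp_perm_perm_inv)
  finally show ?thesis .
qed

lemma word_comp_perm_cancel: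
  assumes "is_perm p" and "length u = length p"
  shows "word_comp (word_comp u (perm_inv p)) p = u"
proof -
  have "word_comp (word_comp u (perm_inv p)) p = word_comp u (word_comp (perm_inv p) p)"
    using assms(1) unfolding is_perm_def by (simp add: word_comp_assoc)
  also have "\<dots> = u"
    using assms word_comp_id[of u] by (simp add: word_comp_perm_inv_perm)
  finally show ?thesis .
qed

lemma mset_perm:
  assumes "is_perm p"
  shows "mset p = mset [1..<Suc (length p)]"
  using assms unfolding is_perm_def
  by (metis distinct_upt set_eq_iff_mset_eq_distinct set_upt atLeastLessThanSuc_atLeastAtMost)

lemma zip_word_comp_self: "zip (word_comp x p) p = map (\<lambda>j. (x ! (j - 1), j)) p"
  by (rule nth_equalityI) (auto simp: word_comp_def)

lemma zip_self_word_comp: "zip p (word_comp x p) = map (\<lambda>j. (j, x ! (j - 1))) p"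
  by (rule nth_equalityI) (auto simp: word_comp_def)

definition burge_key :: "nat \<times> nat \<Rightarrow> nat \<times> int" where
  "burge_key = (\<lambda>(a, b). (a, - int b))"

lemma inj_burge_key: "inj burge_key"
  by (auto simp: inj_on_def burge_key_def)

lemma burge_T_eq:
  "burge_T u v = (map fst (sort_key burge_key (zip v u)), map snd (sort_key burge_key (zip v u)))"
  unfolding burge_T_def burge_key_def by (simp add: Let_def)

lemma sort_burge_key_eq_iff:
  "sort_key burge_key xs = ys \<longleftrightarrow> mset ys = mset xs \<and> sorted (map burge_key ys)"
  by (metis mset_sort sort_key_inj_key_eq sorted_sort_key inj_burge_key inj_on_subset subset_UNIV)

lemma Des_WI_subset_Des_iff:
  assumes "length u = length p"
  shows "Des_WI u \<subseteq> Des p \<longleftrightarrow> (\<forall>i. Suc i < length p \<longrightarrow> u ! i = u ! Suc i \<longrightarrow> p ! Suc i < p ! i)"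
proof
  assume "Des_WI u \<subseteq> Des p"
  then show "\<forall>i. Suc i < length p \<longrightarrow> u ! i = u ! Suc i \<longrightarrow> p ! Suc i < p ! i"
    using assms unfolding Des_WI_def Des_def by (auto simp: subset_iff)
next
  assume descents: "\<forall>i. Suc i < length p \<longrightarrow> u ! i = u ! Suc i \<longrightarrow> p ! Suc i < p ! i"
  show "Des_WI u \<subseteq> Des p"
  proof
    fix i assume "i \<in> Des_WI u"
    then obtain k where "i = Suc k" "Suc k < length p" "u ! k = u ! Suc k"
      using assms unfolding Des_WI_def by (cases i) auto
    then show "i \<in> Des p"
      using descents unfolding Des_def by simp
  qed
qed

lemma Des_WI_distinct:
  assumes "distinct u"
  shows "Des_WI u = {}"
  using assms unfolding Des_WI_def by (auto simp: nth_eq_iff_index_eq)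

lemma sorted_burge_key_zip_iff:
  assumes "length u = length p" and "distinct p"
  shows "sorted (map burge_key (zip u p)) \<longleftrightarrow> sorted u \<and> Des_WI u \<subseteq> Des p"
proof -
  have adjacent: "burge_key (u ! i, p ! i) \<le> burge_key (u ! Suc i, p ! Suc i) \<longleftrightarrow>
      u ! i \<le> u ! Suc i \<and> (u ! i = u ! Suc i \<longrightarrow> p ! Suc i < p ! i)"
    if "Suc i < length p" for i
  proof -
    have "p ! i \<noteq> p ! Suc i"
      using that assms(2) by (simp add: nth_eq_iff_index_eq)
    then show ?thesis
      by (auto simp: burge_key_def less_eq_prod_def)
  qed
  show ?thesis
    unfolding Des_WI_subset_Des_iff[OF assms(1)] sorted_iff_nth_Suc
    using assms(1) adjacent by auto
qed

lemma gamma_eq: "gamma x = map snd (sort_key burge_key (zip x [1..<Suc (length x)]))"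
  unfolding gamma_def burge_T_eq by simp

lemma mset_gamma: "mset (gamma x) = mset [1..<Suc (length x)]"
  unfolding gamma_eq by (metis mset_map mset_sort map_snd_zip length_upt diff_Suc_1)

lemma length_gamma: "length (gamma x) = length x"
  using mset_gamma[of x] by (metis size_mset length_upt diff_Suc_1)

lemma is_perm_gamma: "is_perm (gamma x)"
  unfolding is_perm_def
  by (metis mset_gamma distinct_upt mset_eq_imp_distinct_iff mset_eq_setD set_upt
      atLeastLessThanSuc_atLeastAtMost size_mset length_upt diff_Suc_1)

lemma gamma_eq_iff:
  assumes "is_perm p" and "length p = length x"
  shows "gamma x = p \<longleftrightarrow> sorted (word_comp x p) \<and> Des_WI (word_comp x p) \<subseteq> Des p"
proof -
  define column where "column j = (x ! (j - 1), j)" for j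
  define cols where "cols = sort_key burge_key (map column [1..<Suc (length x)])"
  have zip_id: "zip x [1..<Suc (length x)] = map column [1..<Suc (length x)]"
    using zip_word_comp_self[of x "[1..<Suc (length x)]"] word_comp_id[of x] by (simp add: column_def)
  have "\<forall>c \<in> set cols. column (snd c) = c"
    by (auto simp: cols_def column_def)
  then have cols_eq: "cols = map column (map snd cols)"
    by (simp add: map_idI)
  have "gamma x = map snd cols"
    unfolding gamma_eq zip_id cols_def ..
  moreover have "map snd (map column p) = p"
    by (simp add: column_def comp_def)
  ultimately have "gamma x = p \<longleftrightarrow> cols = map column p"
    using cols_eq by metis
  also have "\<dots> \<longleftrightarrow> sorted (map burge_key (map column p))"
    using mset_perm[OF assms(1)] assms(2) unfolding cols_def sort_burge_key_eq_iff by simp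
  also have "\<dots> \<longleftrightarrow> sorted (word_comp x p) \<and> Des_WI (word_comp x p) \<subseteq> Des p"
    using sorted_burge_key_zip_iff[of "word_comp x p" p] assms
    unfolding zip_word_comp_self column_def[abs_def] is_perm_def by simp
  finally show ?thesis .
qed

lemma burge_T_perm:
  assumes "is_perm p" and "length u = length p"
  shows "burge_T u p = ([1..<Suc (length p)], word_comp u (perm_inv p))"
proof -
  define w where "w = word_comp u (perm_inv p)"
  define column where "column j = (j, w ! (j - 1))" for j
  have "zip p u = map column p"
    using zip_self_word_comp[of p w] word_comp_perm_cancel[OF assms] by (simp add: w_def column_def)
  moreover have "zip [1..<Suc (length p)] w = map column [1..<Suc (length p)]"
    using zip_self_word_comp[of "[1..<Suc (length p)]" w] word_comp_id[of w]
    by (simp add: w_def column_def)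
  moreover have "sorted (map burge_key (map column [1..<Suc (length p)]))"
    by (auto simp: sorted_iff_nth_Suc burge_key_def column_def less_eq_prod_def nth_append)
  ultimately have "sort_key burge_key (zip p u) = zip [1..<Suc (length p)] w"
    using mset_perm[OF assms(1)] unfolding sort_burge_key_eq_iff by simp
  then show ?thesis
    unfolding burge_T_eq by (simp add: w_def)
qed

lemma mem_Cay_iff: "x \<in> Cay \<longleftrightarrow> is_cayley x"
  unfolding Cay_def Cay_n_def by auto

lemma mem_WI_of_iff:
  "u \<in> WI_of p \<longleftrightarrow> length u = length p \<and> is_cayley u \<and> sorted u \<and> Des_WI u \<subseteq> Des p"
  unfolding WI_of_def WI_n_def Cay_n_def by auto

lemma gamma_eq_iff_word_comp_mem_WI_of:
  assumes "is_perm p" and "length x = length p"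
  shows "x \<in> Cay \<and> gamma x = p \<longleftrightarrow> word_comp x p \<in> WI_of p"
  using assms gamma_eq_iff[OF assms(1)] is_cayley_word_comp[of p x]
  unfolding mem_Cay_iff mem_WI_of_iff is_perm_def by auto

lemma fishburn_basis_eq_gamma_fibre:
  assumes "is_perm p"
  shows "fishburn_basis p = {x \<in> Cay. gamma x = p}"
proof -
  have "fishburn_basis p = (\<lambda>u. word_comp u (perm_inv p)) ` WI_of p"
    unfolding fishburn_basis_def Setcompr_eq_image
    by (rule image_cong) (simp_all add: burge_T_perm[OF assms] mem_WI_of_iff)
  also have "\<dots> = {x \<in> Cay. gamma x = p}"
  proof (intro equalityI subsetI)
    fix x assume "x \<in> (\<lambda>u. word_comp u (perm_inv p)) ` WI_of p"
    then obtain u where "u \<in> WI_of p" and "x = word_comp u (perm_inv p)"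
      by blast
    then show "x \<in> {x \<in> Cay. gamma x = p}"
      using gamma_eq_iff_word_comp_mem_WI_of[OF assms] word_comp_perm_cancel[OF assms]
      unfolding mem_WI_of_iff by auto
  next
    fix x assume "x \<in> {x \<in> Cay. gamma x = p}"
    then have "length x = length p" and "word_comp x p \<in> WI_of p"
      using gamma_eq_iff_word_comp_mem_WI_of[OF assms] length_gamma[of x] by auto
    then show "x \<in> (\<lambda>u. word_comp u (perm_inv p)) ` WI_of p"
      using word_comp_perm_inv_cancel[OF assms] by (metis image_eqI)
  qed
  finally show ?thesis .
qed

lemma gamma_perm_inv:
  assumes "is_perm p"
  shows "gamma (perm_inv p) = p"
  using assms gamma_eq_iff[OF assms] word_comp_perm_inv_perm[OF assms]
  by (simp add: Des_WI_distinct)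

theorem lemma4p10:
  shows "(\<forall>y \<in> Cay. cay_class y = fishburn_basis (gamma y))
       \<and> (\<forall>\<sigma>. is_perm \<sigma> \<longrightarrow> fishburn_basis \<sigma> = cay_class (perm_inv \<sigma>))"
proof (intro conjI ballI allI impI)
  fix y
  show "cay_class y = fishburn_basis (gamma y)"
    unfolding cay_class_def fishburn_basis_eq_gamma_fibre[OF is_perm_gamma] ..
next
  fix \<sigma> assume "is_perm \<sigma>"
  then show "fishburn_basis \<sigma> = cay_class (perm_inv \<sigma>)"
    unfolding cay_class_def by (simp add: fishburn_basis_eq_gamma_fibre gamma_perm_inv)
qed

end
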